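(* Let $\widetilde D,\widetilde C\in\mathbb{R}^{d\times d}$ satisfy Condition $\widetilde A$, let $K$ be the unique symmetric positive definite solution of $2\widetilde D=\widetilde CK+K\widetilde C^T$, and set $C:=K^{-1/2}\widetilde CK^{1/2}$, $C_S:=\frac12(C+C^T)$, $C_{AS}:=\frac12(C-C^T)$. For $m\in\mathbb N_0$ define $$T_m:=\sum_{j=0}^m C_{AS}^j C_S (C_{AS}^T)^j,\qquad \widetilde T_m:=\sum_{j=0}^m \widetilde C^j\widetilde D(\widetilde C^T)^j.$$ Then for every $m\in\mathbb N_0$: $T_m$ is positive definite if and only if $\widetilde T_m$ is positive definite. In particular the minimal $m$ with $T_m>0$ equals the minimal $m$ with $\widetilde T_m>0$.
   Context: Condition $\widetilde A$: (1) $\widetilde D$ is symmetric positive semi-definite; (2) there is no non-trivial $\widetilde C^T$-invariant subspace of $\ker\widetilde D$; (3) $\widetilde C$ is positive stable, i.e. all its eigenvalues have positive real part. Under this condition the symmetric positive definite solution $K$ of the Lyapunov equation exists and is unique, and $K^{-1/2}\widetilde DK^{-1/2}=C_S$. The minimal $m$ with $T_m>0$ (resp. $\widetilde T_m>0$) is called the hypocoercivity index. *)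

theory Defs
  imports "HOL-Analysis.Analysis"
begin

text \<open>Matrix powers with respect to the matrix product (the operator ^ on vec is componentwise).\<close>
fun matpow :: "'a::semiring_1 ^'n^'n \<Rightarrow> nat \<Rightarrow> 'a^'n^'n" where
  "matpow A 0 = mat 1"
| "matpow A (Suc k) = A ** matpow A k"

definition symmetric_mat :: "real^'n^'n \<Rightarrow> bool" where
  "symmetric_mat A \<longleftrightarrow> transpose A = A"

definition pos_semidef :: "real^'n^'n \<Rightarrow> bool" where
  "pos_semidef A \<longleftrightarrow> symmetric_mat A \<and> (\<forall>x. 0 \<le> x \<bullet> (A *v x))"

definition pos_def :: "real^'n^'n \<Rightarrow> bool" where
  "pos_def A \<longleftrightarrow> symmetric_mat A \<and> (\<forall>x. x \<noteq> 0 \<longrightarrow> 0 < x \<bullet> (A *v x))"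

definition complexify :: "real^'n^'n \<Rightarrow> complex^'n^'n" where
  "complexify A = (\<chi> i j. complex_of_real (A $ i $ j))"

definition positive_stable :: "real^'n^'n \<Rightarrow> bool" where
  "positive_stable A \<longleftrightarrow>
     (\<forall>(l::complex) (v::complex^'n). v \<noteq> 0 \<and> complexify A *v v = l *s v \<longrightarrow> 0 < Re l)"

definition condition_A :: "real^'n^'n \<Rightarrow> real^'n^'n \<Rightarrow> bool" where
  "condition_A D C \<longleftrightarrow>
     pos_semidef D \<and>
     (\<forall>V. subspace V \<and> V \<subseteq> {x. D *v x = 0} \<and> (\<forall>x\<in>V. transpose C *v x \<in> V)
          \<longrightarrow> V = {0}) \<and>
     positive_stable C"

end

theory Submission
  imports Defs
begin

text \<open>
  With K = S S^T the Lyapunov equation says Dt = S CS S^T, and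
  Ct = S C S^-1, so the sum for Ct and Dt is congruent to the Gramian
  sum_{j<=m} C^j CS (C^T)^j, and congruence preserves definiteness.
  For positive semidefinite P, a Gramian sum_{j<=m} B^j P (B^T)^j is definite iff no
  x /= 0 satisfies P (B^T)^j x = 0 for all j <= m. Since C = CAS + CS, the matrices C^T
  and CAS^T agree on ker CS, hence produce the same iterates of such an x; so the
  kernel conditions for C and CAS coincide.
\<close>

lemma matrix_inv_right: "invertible A \<Longrightarrow> A ** matrix_inv A = mat 1"
  unfolding invertible_def matrix_inv_def by (rule someI2_ex) auto

lemma matrix_inv_left: "invertible A \<Longrightarrow> matrix_inv A ** A = mat 1"
  unfolding invertible_def matrix_inv_def by (rule someI2_ex) auto

lemma invertible_mult_vector_eq_0_iff:
  fixes A :: "'a::field^'n^'n"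
  assumes "invertible A"
  shows "A *v x = 0 \<longleftrightarrow> x = 0"
  using matrix_inv_left[OF assms]
  by (metis matrix_vector_mul_assoc matrix_vector_mul_lid matrix_vector_mult_0_right)

lemma invertible_all_mult_vector_iff:
  fixes A :: "'a::field^'n^'n"
  assumes "invertible A"
  shows "(\<forall>x. Q (A *v x)) \<longleftrightarrow> (\<forall>y. Q y)"
proof
  assume "\<forall>x. Q (A *v x)"
  then have "Q (A *v (matrix_inv A *v y))" for y
    by blast
  then show "\<forall>y. Q y"
    by (simp add: matrix_vector_mul_assoc matrix_inv_right[OF assms])
qed blast

lemma pos_def_imp_invertible:
  assumes "pos_def (A::real^'n^'n)"
  shows "invertible A"
proof -
  have "A *v x = 0 \<Longrightarrow> x = 0" for x
    using assms unfolding pos_def_def by force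
  then show ?thesis
    using invertible_left_inverse matrix_left_invertible_ker by blast
qed

lemma matrix_add_rdistrib: "(A + B) ** C = A ** C + B ** C"
  by (vector matrix_matrix_mult_def sum.distrib distrib_right)

lemma matrix_mul_sum_left: "A ** sum f I = (\<Sum>j\<in>I. A ** f j)"
  by (induction I rule: infinite_finite_induct) (simp_all add: matrix_add_ldistrib)

lemma matrix_mul_sum_right: "sum f I ** A = (\<Sum>j\<in>I. f j ** A)"
  by (induction I rule: infinite_finite_induct) (simp_all add: matrix_add_rdistrib)

lemma matrix_vector_mult_sum_left: "sum f I *v x = (\<Sum>j\<in>I. f j *v x)"
  by (induction I rule: infinite_finite_induct) (simp_all add: matrix_vector_mult_add_rdistrib)

lemma transpose_add: "transpose (A + B) = transpose A + transpose B"
  by (simp add: transpose_def vec_eq_iff)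

lemma transpose_sum: "transpose (sum f I) = (\<Sum>j\<in>I. transpose (f j))"
  by (simp add: transpose_def vec_eq_iff)

lemma matpow_commute: "matpow A k ** A = A ** matpow A k"
  by (induction k) (simp_all add: matrix_mul_assoc[symmetric])

lemma transpose_matpow:
  "transpose (matpow (A::'a::comm_semiring_1^'n^'n) k) = matpow (transpose A) k"
  by (induction k) (simp_all add: matrix_transpose_mul matpow_commute)

lemma matpow_similar:
  assumes "invertible S"
  shows "matpow (S ** B ** matrix_inv S) k = S ** matpow B k ** matrix_inv S"
proof (induction k)
  case 0
  show ?case using matrix_inv_right[OF assms] by simp
next
  case (Suc k)
  then show ?case
    by (simp add: matrix_mul_assoc) (simp add: matrix_mul_assoc[symmetric] matrix_inv_left[OF assms])
qed

lemma matpow_mult_vector_eq: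
  assumes "\<forall>j<k. A *v (matpow B j *v x) = B *v (matpow B j *v x)"
  shows "matpow A k *v x = matpow B k *v x"
  using assms by (induction k) (simp_all flip: matrix_vector_mul_assoc)

lemma agree_on_iterates_swap:
  assumes "\<forall>j\<le>m. A *v (matpow A j *v x) = B *v (matpow A j *v x)"
  shows "\<forall>j\<le>m. A *v (matpow B j *v x) = B *v (matpow B j *v x)"
proof (intro allI impI)
  fix j
  assume "j \<le> m"
  moreover have "matpow B j *v x = matpow A j *v x"
    using assms \<open>j \<le> m\<close> by (intro matpow_mult_vector_eq) simp
  ultimately show "A *v (matpow B j *v x) = B *v (matpow B j *v x)"
    using assms by simp
qed

lemma inner_congruence:
  fixes S M :: "real^'n^'n"
  shows "x \<bullet> ((S ** M ** transpose S) *v x) = (transpose S *v x) \<bullet> (M *v (transpose S *v x))"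
proof -
  have "x \<bullet> (S *v y) = (transpose S *v x) \<bullet> y" for y
    by (simp add: dot_lmul_matrix)
  then show ?thesis
    unfolding matrix_vector_mul_assoc[symmetric] .
qed

lemma congruence_cancel:
  fixes S :: "real^'n^'n"
  assumes "invertible S"
  shows "S ** M ** transpose S = S ** N ** transpose S \<longleftrightarrow> M = N"
proof
  assume "S ** M ** transpose S = S ** N ** transpose S"
  then have "matrix_inv S ** (S ** M ** transpose S) ** transpose (matrix_inv S)
           = matrix_inv S ** (S ** N ** transpose S) ** transpose (matrix_inv S)"
    by simp
  moreover have "transpose S ** transpose (matrix_inv S) = mat 1"
    by (simp add: assms matrix_inv_left flip: matrix_transpose_mul)
  ultimately show "M = N"
    by (simp add: matrix_mul_assoc assms matrix_inv_left) (simp flip: matrix_mul_assoc)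
qed simp

lemma symmetric_mat_congruence_iff:
  fixes S :: "real^'n^'n"
  assumes "invertible S"
  shows "symmetric_mat (S ** M ** transpose S) \<longleftrightarrow> symmetric_mat M"
  unfolding symmetric_mat_def using congruence_cancel[OF assms, of "transpose M" M]
  by (simp add: matrix_transpose_mul matrix_mul_assoc)

lemma pos_semidef_congruence_iff:
  fixes S :: "real^'n^'n"
  assumes "invertible S"
  shows "pos_semidef (S ** M ** transpose S) \<longleftrightarrow> pos_semidef M"
  unfolding pos_semidef_def inner_congruence symmetric_mat_congruence_iff[OF assms]
  using invertible_all_mult_vector_iff[OF transpose_invertible[OF assms], of "\<lambda>y. 0 \<le> y \<bullet> (M *v y)"]
  by simp

lemma pos_def_congruence_iff:
  fixes S :: "real^'n^'n"
  assumes "invertible S"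
  shows "pos_def (S ** M ** transpose S) \<longleftrightarrow> pos_def M"
proof -
  have St: "invertible (transpose S)"
    using transpose_invertible[OF assms] .
  show ?thesis
    unfolding pos_def_def inner_congruence symmetric_mat_congruence_iff[OF assms]
    using invertible_all_mult_vector_iff[OF St, of "\<lambda>y. y \<noteq> 0 \<longrightarrow> 0 < y \<bullet> (M *v y)"]
      invertible_mult_vector_eq_0_iff[OF St]
    by simp
qed

lemma pos_semidef_inner_eq_0_iff:
  fixes P :: "real^'n^'n"
  assumes "pos_semidef P"
  shows "x \<bullet> (P *v x) = 0 \<longleftrightarrow> P *v x = 0"
proof
  assume x: "x \<bullet> (P *v x) = 0"
  define z where "z = P *v x"
  define a where "a = z \<bullet> z"
  define b where "b = z \<bullet> (P *v z)"
  have P: "transpose P = P" "\<And>y. 0 \<le> y \<bullet> (P *v y)"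
    using assms unfolding pos_semidef_def symmetric_mat_def by auto
  have "x v* P = z"
    using vector_transpose_matrix[of x P] P(1) by (simp add: z_def)
  then have xz: "x \<bullet> (P *v z) = a"
    by (simp add: a_def flip: dot_lmul_matrix)
  have zx: "z \<bullet> (P *v x) = a"
    by (simp add: a_def z_def)
  \<comment> \<open>the form would be negative at this point of the line through x in direction P x unless a = 0\<close>
  have "((b + 1) *\<^sub>R x - a *\<^sub>R z) \<bullet> (P *v ((b + 1) *\<^sub>R x - a *\<^sub>R z)) = - a\<^sup>2 * (b + 2)"
    using x xz zx by (simp add: inner_diff_left inner_diff_right power2_eq_square algebra_simps b_def)
  then have "0 \<le> - a\<^sup>2 * (b + 2)"
    using P(2) by metis
  moreover have "b \<ge> 0"
    using P(2) by (simp add: b_def)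
  ultimately have "a\<^sup>2 \<le> 0"
    by (simp add: mult_le_0_iff)
  then have "a = 0"
    by simp
  then show "P *v x = 0"
    by (simp add: a_def z_def)
qed simp

definition finite_gramian :: "real^'n^'n \<Rightarrow> real^'n^'n \<Rightarrow> nat \<Rightarrow> real^'n^'n" where
  "finite_gramian B P m = (\<Sum>j\<le>m. matpow B j ** P ** matpow (transpose B) j)"

lemma symmetric_finite_gramian:
  "symmetric_mat P \<Longrightarrow> symmetric_mat (finite_gramian B P m)"
  unfolding finite_gramian_def symmetric_mat_def transpose_sum
  by (simp add: matrix_transpose_mul transpose_matpow matrix_mul_assoc)

lemma inner_finite_gramian:
  "x \<bullet> (finite_gramian B P m *v x) =
     (\<Sum>j\<le>m. (matpow (transpose B) j *v x) \<bullet> (P *v (matpow (transpose B) j *v x)))"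
  unfolding finite_gramian_def matrix_vector_mult_sum_left inner_sum_right
  by (simp add: inner_congruence flip: transpose_matpow)

lemma pos_def_finite_gramian_iff:
  assumes "pos_semidef P"
  shows "pos_def (finite_gramian B P m) \<longleftrightarrow>
    (\<forall>x. (\<forall>j\<le>m. P *v (matpow (transpose B) j *v x) = 0) \<longrightarrow> x = 0)"
proof -
  have nonneg: "0 \<le> y \<bullet> (P *v y)" for y
    using assms unfolding pos_semidef_def by blast
  have "x \<bullet> (finite_gramian B P m *v x) = 0 \<longleftrightarrow>
      (\<forall>j\<le>m. P *v (matpow (transpose B) j *v x) = 0)" for x
    unfolding inner_finite_gramian
    by (auto simp: sum_nonneg_eq_0_iff nonneg pos_semidef_inner_eq_0_iff[OF assms])
  moreover have "0 \<le> x \<bullet> (finite_gramian B P m *v x)" for x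
    unfolding inner_finite_gramian by (simp add: sum_nonneg nonneg)
  moreover have "symmetric_mat (finite_gramian B P m)"
    using assms symmetric_finite_gramian unfolding pos_semidef_def by blast
  ultimately show ?thesis
    unfolding pos_def_def by (metis order_less_le)
qed

lemma finite_gramian_similar:
  fixes S :: "real^'n^'n"
  assumes "invertible S"
  shows "finite_gramian (S ** B ** matrix_inv S) (S ** P ** transpose S) m
       = S ** finite_gramian B P m ** transpose S"
proof -
  have inv: "matrix_inv S ** S = mat 1" "transpose S ** transpose (matrix_inv S) = mat 1"
    by (simp_all add: assms matrix_inv_left flip: matrix_transpose_mul)
  have "matpow (S ** B ** matrix_inv S) j ** (S ** P ** transpose S) **
          transpose (matpow (S ** B ** matrix_inv S) j)
        = S ** (matpow B j ** P ** transpose (matpow B j)) ** transpose S" for j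
    unfolding matpow_similar[OF assms] matrix_transpose_mul transpose_transpose
    by (simp add: matrix_mul_assoc) (simp flip: matrix_mul_assoc add: inv)
  then show ?thesis
    unfolding finite_gramian_def matrix_mul_sum_left matrix_mul_sum_right
    by (simp flip: transpose_matpow)
qed

lemma pos_def_finite_gramian_perturb_iff:
  assumes P: "pos_semidef P" and B: "B = B' + P"
  shows "pos_def (finite_gramian B P m) \<longleftrightarrow> pos_def (finite_gramian B' P m)"
proof -
  have "transpose B = transpose B' + P"
    using P B unfolding pos_semidef_def symmetric_mat_def by (simp add: transpose_add)
  then have agree: "P *v v = 0 \<longleftrightarrow> transpose B *v v = transpose B' *v v" for v
    by (simp add: matrix_vector_mult_add_rdistrib)
  show ?thesis
    unfolding pos_def_finite_gramian_iff[OF P] agree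
    using agree_on_iterates_swap[where A = "transpose B" and B = "transpose B'"]
      agree_on_iterates_swap[where A = "transpose B'" and B = "transpose B"]
    by metis
qed

lemma lyapunov_congruence:
  fixes S Ct Dt :: "real^'n^'n"
  defines "C \<equiv> matrix_inv S ** Ct ** S"
  assumes S: "invertible S"
    and lyap: "2 *\<^sub>R Dt = Ct ** (S ** transpose S) + (S ** transpose S) ** transpose Ct"
  shows "Dt = S ** ((1/2) *\<^sub>R (C + transpose C)) ** transpose S"
proof -
  have inv: "S ** matrix_inv S = mat 1" "transpose (matrix_inv S) ** transpose S = mat 1"
    by (simp_all add: S matrix_inv_right flip: matrix_transpose_mul)
  have "Ct ** (S ** transpose S) = S ** C ** transpose S"
    unfolding C_def by (simp add: matrix_mul_assoc inv)
  moreover have "(S ** transpose S) ** transpose Ct = S ** transpose C ** transpose S"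
    unfolding C_def by (simp add: matrix_transpose_mul matrix_mul_assoc) (simp flip: matrix_mul_assoc add: inv)
  ultimately have "2 *\<^sub>R Dt = S ** (C + transpose C) ** transpose S"
    using lyap by (simp add: matrix_add_ldistrib matrix_add_rdistrib)
  then have "Dt = (1/2) *\<^sub>R (S ** (C + transpose C) ** transpose S)"
    by (metis scaleR_scaleR nonzero_divide_eq_eq scaleR_one zero_neq_numeral)
  then show ?thesis
    by (simp add: matrix_scalar_ac flip: scalar_matrix_assoc)
qed

theorem proposition3p11:
  fixes Dt Ct K S :: "real^'n^'n"
  assumes condA: "condition_A Dt Ct"
    and K_pd: "pos_def K"
    and lyap: "2 *\<^sub>R Dt = Ct ** K + K ** transpose Ct"
    and S_pd: "pos_def S"
    and S_sqrt: "S ** S = K"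
  shows "let C = matrix_inv S ** Ct ** S;
             CS = (1/2) *\<^sub>R (C + transpose C);
             CAS = (1/2) *\<^sub>R (C - transpose C);
             T = (\<lambda>m. \<Sum>j\<le>m. matpow CAS j ** CS ** matpow (transpose CAS) j);
             Tt = (\<lambda>m. \<Sum>j\<le>m. matpow Ct j ** Dt ** matpow (transpose Ct) j)
         in (\<forall>m. pos_def (T m) \<longleftrightarrow> pos_def (Tt m))
            \<and> (LEAST m. pos_def (T m)) = (LEAST m. pos_def (Tt m))"
proof -
  define C where "C = matrix_inv S ** Ct ** S"
  define CS where "CS = (1/2::real) *\<^sub>R (C + transpose C)"
  define CAS where "CAS = (1/2::real) *\<^sub>R (C - transpose C)"
  have S: "invertible S" "transpose S = S"
    using S_pd pos_def_imp_invertible unfolding pos_def_def symmetric_mat_def by auto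
  have Ct: "Ct = S ** C ** matrix_inv S"
    unfolding C_def
    by (simp add: matrix_mul_assoc matrix_inv_right S) (simp flip: matrix_mul_assoc add: matrix_inv_right S)
  have Dt: "Dt = S ** CS ** transpose S"
    using lyapunov_congruence[OF S(1)] lyap S(2) S_sqrt unfolding C_def CS_def by metis
  \<comment> \<open>of condition A only the semidefiniteness of Dt is used; K_pd is implied by S_pd and S_sqrt\<close>
  have "pos_semidef CS"
    using condA pos_semidef_congruence_iff[OF S(1)] unfolding condition_A_def Dt by blast
  have "pos_def (finite_gramian CAS CS m) \<longleftrightarrow> pos_def (finite_gramian Ct Dt m)" for m
  proof -
    have "pos_def (finite_gramian CAS CS m) \<longleftrightarrow> pos_def (finite_gramian C CS m)"
      by (rule pos_def_finite_gramian_perturb_iff[OF \<open>pos_semidef CS\<close>, symmetric])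
        (simp add: CS_def CAS_def flip: scaleR_add_right)
    also have "\<dots> \<longleftrightarrow> pos_def (finite_gramian Ct Dt m)"
      unfolding Ct Dt finite_gramian_similar[OF S(1)] pos_def_congruence_iff[OF S(1)] ..
    finally show ?thesis .
  qed
  then show ?thesis
    unfolding Let_def C_def[symmetric] CS_def[symmetric] CAS_def[symmetric]
      finite_gramian_def[symmetric] by simp
qed

end
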